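(* Let $A=\langle Q,\delta,\gamma,F\rangle$ be a finitely supported and well-nested pomset automaton, and let $q\in Q$ be recursive. Then $$L_A(q)=\Bigl(\bigcup_{r\in Q:\ \gamma(q,r,q)=\top} L_A(r)\Bigr)^{\dagger}.$$
   Context: Fix a finite alphabet $\Sigma$; pomsets are isomorphism classes of $\Sigma$-labelled posets, $1$ the empty pomset, $a\in\Sigma$ the one-point pomset, $\cdot,\parallel$ sequential/parallel composition, $\mathsf{Pom}^{\mathsf{sp}}$ the smallest set containing $1$ and all $a$ closed under both. For a pomset language $\mathcal U$, $\mathcal U^\dagger=\bigcup_{n}\mathcal U^{(n)}$ with $\mathcal U^{(0)}=\{1\}$ and $\mathcal U^{(n+1)}=\{U\parallel V: U\in\mathcal U, V\in\mathcal U^{(n)}\}$. A PA is $A=\langle Q,\delta,\gamma,F\rangle$ with $F\subseteq Q$, $\delta:Q\times\Sigma\to Q$, $\gamma:Q^3\to Q$, with states $\bot\notin F$, $\top\in F$ such that $\delta(\bot,a)=\delta(\top,a)=\bot$, $\gamma(\bot,r,s)=\gamma(\top,r,s)=\bot$. Traces: the smallest relation with $q\xrightarrow{1}_A q$; $q\xrightarrow{a}_A\delta(q,a)$; $q\xrightarrow{U}_A q''\xrightarrow{V}_A q'$ implies $q\xrightarrow{U\cdot V}_A q'$; $r\xrightarrow{U}_A r'\in F$, $s\xrightarrow{V}_A s'\in F$ imply $q\xrightarrow{U\parallel V}_A\gamma(q,r,s)$. $L_A(q)=\{U:\exists q'\in F.\ q\xrightarrow{U}_A q'\}$. $\preceq_A$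 is the smallest preorder on $Q$ with $r,s\preceq_A q$ when $\gamma(q,r,s)\neq\bot$, $\delta(q,a)\preceq_A q$, and $\gamma(q,r,s)\preceq_A q$; $q\prec_A q'$ iff $q\preceq_A q'$ and $q'\not\preceq_A q$. $\pi_A(q)$ is the smallest $\preceq_A$-downward-closed set containing $q$; $A$ is finitely supported if all $\pi_A(q)$ are finite. A state $q$ is sequential if $\gamma(q,r,s)\neq\bot$ implies $r,s\prec_A q$. A state $q\in F$ is recursive if it is not sequential, $\delta(q,a)=\bot$ for all $a\in\Sigma$, and whenever $\gamma(q,r,s)\neq\bot$ we have $s=q$, $r\prec_A q$ and $\gamma(q,r,s)=\top$. $A$ is well-nested if every state is sequential or recursive. *)

theory Defs
  imports Main
begin

text \<open>A (finite) labelled poset is represented with carrier a finite set of naturals,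
  a reflexive partial order on it, and a labelling function (only values on the carrier matter).\<close>

type_synonym 'a lposet = "nat set \<times> nat rel \<times> (nat \<Rightarrow> 'a)"

definition is_lposet :: "'a lposet \<Rightarrow> bool" where
  "is_lposet X = (case X of (C, R, l) \<Rightarrow>
      finite C \<and> R \<subseteq> C \<times> C \<and> refl_on C R \<and> antisym R \<and> trans R)"

definition lp_iso :: "'a lposet \<Rightarrow> 'a lposet \<Rightarrow> bool" where
  "lp_iso X Y = (case X of (C, R, l) \<Rightarrow> case Y of (C', R', l') \<Rightarrow>
      (\<exists>f. bij_betw f C C' \<and> (\<forall>x\<in>C. \<forall>y\<in>C. (x, y) \<in> R \<longleftrightarrow> (f x, f y) \<in> R')
           \<and> (\<forall>x\<in>C. l' (f x) = l x)))"

definition lp_class :: "'a lposet \<Rightarrow> 'a lposet set" where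
  "lp_class X = {Y. is_lposet Y \<and> lp_iso X Y}"

typedef 'a pomset = "{S :: 'a lposet set. \<exists>X. is_lposet X \<and> S = lp_class X}"
proof
  show "lp_class ({}, {}, \<lambda>_. undefined) \<in> {S :: 'a lposet set. \<exists>X. is_lposet X \<and> S = lp_class X}"
    by (auto simp: is_lposet_def refl_on_def antisym_def trans_def)
qed

definition pom_of :: "'a lposet \<Rightarrow> 'a pomset" where
  "pom_of X = Abs_pomset (lp_class X)"

definition pom_rep :: "'a pomset \<Rightarrow> 'a lposet" where
  "pom_rep U = (SOME X. is_lposet X \<and> Rep_pomset U = lp_class X)"

definition lp_seq :: "'a lposet \<Rightarrow> 'a lposet \<Rightarrow> 'a lposet" where
  "lp_seq X Y = (case X of (C, R, l) \<Rightarrow> case Y of (C', R', l') \<Rightarrow>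
     ((\<lambda>n. 2*n) ` C \<union> (\<lambda>n. 2*n+1) ` C',
      {(2*x, 2*y) | x y. (x, y) \<in> R} \<union> {(2*x+1, 2*y+1) | x y. (x, y) \<in> R'}
        \<union> {(2*x, 2*y+1) | x y. x \<in> C \<and> y \<in> C'},
      \<lambda>n. if even n then l (n div 2) else l' (n div 2)))"

definition lp_par :: "'a lposet \<Rightarrow> 'a lposet \<Rightarrow> 'a lposet" where
  "lp_par X Y = (case X of (C, R, l) \<Rightarrow> case Y of (C', R', l') \<Rightarrow>
     ((\<lambda>n. 2*n) ` C \<union> (\<lambda>n. 2*n+1) ` C',
      {(2*x, 2*y) | x y. (x, y) \<in> R} \<union> {(2*x+1, 2*y+1) | x y. (x, y) \<in> R'},
      \<lambda>n. if even n then l (n div 2) else l' (n div 2)))"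

definition pom_one :: "'a pomset" where
  "pom_one = pom_of ({}, {}, \<lambda>_. undefined)"

definition pom_atom :: "'a \<Rightarrow> 'a pomset" where
  "pom_atom a = pom_of ({0}, {(0, 0)}, \<lambda>_. a)"

definition pom_seq :: "'a pomset \<Rightarrow> 'a pomset \<Rightarrow> 'a pomset" where
  "pom_seq U V = pom_of (lp_seq (pom_rep U) (pom_rep V))"

definition pom_par :: "'a pomset \<Rightarrow> 'a pomset \<Rightarrow> 'a pomset" where
  "pom_par U V = pom_of (lp_par (pom_rep U) (pom_rep V))"

fun par_pow :: "'a pomset set \<Rightarrow> nat \<Rightarrow> 'a pomset set" where
  "par_pow L 0 = {pom_one}"
| "par_pow L (Suc n) = {pom_par U V | U V. U \<in> L \<and> V \<in> par_pow L n}"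

definition par_star :: "'a pomset set \<Rightarrow> 'a pomset set" where
  "par_star L = (\<Union>n. par_pow L n)"

text \<open>The state set Q is the whole type 'q; qbot and qtop are the designated states.\<close>
definition is_PA :: "('q \<Rightarrow> 'a \<Rightarrow> 'q) \<Rightarrow> ('q \<Rightarrow> 'q \<Rightarrow> 'q \<Rightarrow> 'q) \<Rightarrow> 'q set \<Rightarrow> 'q \<Rightarrow> 'q \<Rightarrow> bool" where
  "is_PA \<delta> \<gamma> F qbot qtop = (qbot \<notin> F \<and> qtop \<in> F \<and>
     (\<forall>a. \<delta> qbot a = qbot \<and> \<delta> qtop a = qbot) \<and>
     (\<forall>r s. \<gamma> qbot r s = qbot \<and> \<gamma> qtop r s = qbot))"

inductive trace :: "('q \<Rightarrow> 'a \<Rightarrow> 'q) \<Rightarrow> ('q \<Rightarrow> 'q \<Rightarrow> 'q \<Rightarrow> 'q) \<Rightarrow> 'q set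
     \<Rightarrow> 'q \<Rightarrow> 'a pomset \<Rightarrow> 'q \<Rightarrow> bool"
  for \<delta> \<gamma> F where
  tr_one: "trace \<delta> \<gamma> F q pom_one q"
| tr_atom: "trace \<delta> \<gamma> F q (pom_atom a) (\<delta> q a)"
| tr_seq: "trace \<delta> \<gamma> F q U q'' \<Longrightarrow> trace \<delta> \<gamma> F q'' V q' \<Longrightarrow> trace \<delta> \<gamma> F q (pom_seq U V) q'"
| tr_par: "trace \<delta> \<gamma> F r U r' \<Longrightarrow> r' \<in> F \<Longrightarrow> trace \<delta> \<gamma> F s V s' \<Longrightarrow> s' \<in> F
           \<Longrightarrow> trace \<delta> \<gamma> F q (pom_par U V) (\<gamma> q r s)"

definition lang :: "('q \<Rightarrow> 'a \<Rightarrow> 'q) \<Rightarrow> ('q \<Rightarrow> 'q \<Rightarrow> 'q \<Rightarrow> 'q) \<Rightarrow> 'q set \<Rightarrow> 'q \<Rightarrow> 'a pomset set" where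
  "lang \<delta> \<gamma> F q = {U. \<exists>q'\<in>F. trace \<delta> \<gamma> F q U q'}"

inductive supp_gen :: "('q \<Rightarrow> 'a \<Rightarrow> 'q) \<Rightarrow> ('q \<Rightarrow> 'q \<Rightarrow> 'q \<Rightarrow> 'q) \<Rightarrow> 'q \<Rightarrow> 'q \<Rightarrow> 'q \<Rightarrow> bool"
  for \<delta> \<gamma> qbot where
  sg_left: "\<gamma> q r s \<noteq> qbot \<Longrightarrow> supp_gen \<delta> \<gamma> qbot r q"
| sg_right: "\<gamma> q r s \<noteq> qbot \<Longrightarrow> supp_gen \<delta> \<gamma> qbot s q"
| sg_delta: "supp_gen \<delta> \<gamma> qbot (\<delta> q a) q"
| sg_gamma: "supp_gen \<delta> \<gamma> qbot (\<gamma> q r s) q"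

definition supp_le :: "('q \<Rightarrow> 'a \<Rightarrow> 'q) \<Rightarrow> ('q \<Rightarrow> 'q \<Rightarrow> 'q \<Rightarrow> 'q) \<Rightarrow> 'q \<Rightarrow> 'q \<Rightarrow> 'q \<Rightarrow> bool" where
  "supp_le \<delta> \<gamma> qbot = (supp_gen \<delta> \<gamma> qbot)\<^sup>*\<^sup>*"

definition supp_lt :: "('q \<Rightarrow> 'a \<Rightarrow> 'q) \<Rightarrow> ('q \<Rightarrow> 'q \<Rightarrow> 'q \<Rightarrow> 'q) \<Rightarrow> 'q \<Rightarrow> 'q \<Rightarrow> 'q \<Rightarrow> bool" where
  "supp_lt \<delta> \<gamma> qbot p q = (supp_le \<delta> \<gamma> qbot p q \<and> \<not> supp_le \<delta> \<gamma> qbot q p)"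

definition support :: "('q \<Rightarrow> 'a \<Rightarrow> 'q) \<Rightarrow> ('q \<Rightarrow> 'q \<Rightarrow> 'q \<Rightarrow> 'q) \<Rightarrow> 'q \<Rightarrow> 'q \<Rightarrow> 'q set" where
  "support \<delta> \<gamma> qbot q = {p. supp_le \<delta> \<gamma> qbot p q}"

definition finitely_supported :: "('q \<Rightarrow> 'a \<Rightarrow> 'q) \<Rightarrow> ('q \<Rightarrow> 'q \<Rightarrow> 'q \<Rightarrow> 'q) \<Rightarrow> 'q \<Rightarrow> bool" where
  "finitely_supported \<delta> \<gamma> qbot = (\<forall>q. finite (support \<delta> \<gamma> qbot q))"

definition sequential_state :: "('q \<Rightarrow> 'a \<Rightarrow> 'q) \<Rightarrow> ('q \<Rightarrow> 'q \<Rightarrow> 'q \<Rightarrow> 'q) \<Rightarrow> 'q \<Rightarrow> 'q \<Rightarrow> bool" where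
  "sequential_state \<delta> \<gamma> qbot q =
     (\<forall>r s. \<gamma> q r s \<noteq> qbot \<longrightarrow> supp_lt \<delta> \<gamma> qbot r q \<and> supp_lt \<delta> \<gamma> qbot s q)"

definition recursive_state :: "('q \<Rightarrow> 'a \<Rightarrow> 'q) \<Rightarrow> ('q \<Rightarrow> 'q \<Rightarrow> 'q \<Rightarrow> 'q) \<Rightarrow> 'q set \<Rightarrow> 'q \<Rightarrow> 'q \<Rightarrow> 'q \<Rightarrow> bool" where
  "recursive_state \<delta> \<gamma> F qbot qtop q =
     (q \<in> F \<and> \<not> sequential_state \<delta> \<gamma> qbot q \<and> (\<forall>a. \<delta> q a = qbot) \<and>
      (\<forall>r s. \<gamma> q r s \<noteq> qbot \<longrightarrow> s = q \<and> supp_lt \<delta> \<gamma> qbot r q \<and> \<gamma> q r s = qtop))"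

definition well_nested :: "('q \<Rightarrow> 'a \<Rightarrow> 'q) \<Rightarrow> ('q \<Rightarrow> 'q \<Rightarrow> 'q \<Rightarrow> 'q) \<Rightarrow> 'q set \<Rightarrow> 'q \<Rightarrow> 'q \<Rightarrow> bool" where
  "well_nested \<delta> \<gamma> F qbot qtop =
     (\<forall>q. sequential_state \<delta> \<gamma> qbot q \<or> recursive_state \<delta> \<gamma> F qbot qtop q)"

end

theory Submission
  imports Defs
begin

text \<open>From a recursive state q every transition other than to qbot is a parallel one
  \<open>\<gamma> q r q = qtop\<close>, whose right branch again starts in q, and qtop admits only the
  empty pomset. So an accepting run from q peels off one parallel factor accepted from
  some r with \<open>\<gamma> q r q = qtop\<close> and recurses on the rest; conversely such factors can be
  stacked in parallel.\<close>

lemma lp_iso_refl: "lp_iso X X"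
  unfolding lp_iso_def by (cases X) (auto intro!: exI[of _ id])

lemma lp_iso_sym:
  assumes "lp_iso X Y"
  shows "lp_iso Y X"
proof -
  obtain C R l C' R' l' where X: "X = (C, R, l)" and Y: "Y = (C', R', l')"
    by (cases X, cases Y) auto
  from assms obtain f where f: "bij_betw f C C'"
    "\<forall>x\<in>C. \<forall>y\<in>C. (x, y) \<in> R \<longleftrightarrow> (f x, f y) \<in> R'" "\<forall>x\<in>C. l' (f x) = l x"
    unfolding lp_iso_def X Y by auto
  define g where "g = the_inv_into C f"
  have g: "bij_betw g C' C"
    unfolding g_def using f(1) by (rule bij_betw_the_inv_into)
  have fg: "f (g y) = y" and gC: "g y \<in> C" if "y \<in> C'" for y
    using that f(1) g unfolding g_def by (auto simp: f_the_inv_into_f_bij_betw bij_betwE)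
  show ?thesis
    unfolding lp_iso_def X Y using g f(2,3) fg gC by (auto intro!: exI[of _ g]) metis+
qed

lemma lp_iso_trans:
  assumes "lp_iso X Y" "lp_iso Y Z"
  shows "lp_iso X Z"
proof -
  obtain C R l C' R' l' C'' R'' l'' where
    X: "X = (C, R, l)" and Y: "Y = (C', R', l')" and Z: "Z = (C'', R'', l'')"
    by (cases X, cases Y, cases Z) auto
  from assms(1) obtain f where f: "bij_betw f C C'"
    "\<forall>x\<in>C. \<forall>y\<in>C. (x, y) \<in> R \<longleftrightarrow> (f x, f y) \<in> R'" "\<forall>x\<in>C. l' (f x) = l x"
    unfolding lp_iso_def X Y by auto
  from assms(2) obtain g where g: "bij_betw g C' C''"
    "\<forall>x\<in>C'. \<forall>y\<in>C'. (x, y) \<in> R' \<longleftrightarrow> (g x, g y) \<in> R''" "\<forall>x\<in>C'. l'' (g x) = l' x"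
    unfolding lp_iso_def Y Z by auto
  have "f x \<in> C'" if "x \<in> C" for x
    using f(1) that by (meson bij_betwE)
  then show ?thesis
    unfolding lp_iso_def X Z using bij_betw_trans[OF f(1) g(1)] f(2,3) g(2,3)
    by (auto intro!: exI[of _ "g \<circ> f"])
qed

lemma lp_class_eq: "lp_iso X Y \<Longrightarrow> lp_class X = lp_class Y"
  unfolding lp_class_def using lp_iso_sym lp_iso_trans by blast

lemma pom_rep: "is_lposet (pom_rep U) \<and> Rep_pomset U = lp_class (pom_rep U)"
proof -
  have "\<exists>X. is_lposet X \<and> Rep_pomset U = lp_class X"
    using Rep_pomset[of U] by auto
  then show ?thesis
    unfolding pom_rep_def by (rule someI_ex)
qed

lemma pom_of_iso_rep: "lp_iso (pom_rep U) Z \<Longrightarrow> pom_of Z = U"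
  unfolding pom_of_def using lp_class_eq pom_rep Rep_pomset_inverse by metis

lemma pom_rep_one: "\<exists>l. pom_rep pom_one = ({}, {}, l)"
proof -
  define E :: "'a lposet" where "E = ({}, {}, \<lambda>_. undefined)"
  have "is_lposet E"
    unfolding E_def by (auto simp: is_lposet_def refl_on_def antisym_def trans_def)
  then have "Rep_pomset (pom_one :: 'a pomset) = lp_class E"
    unfolding pom_one_def pom_of_def E_def[symmetric] by (auto intro!: Abs_pomset_inverse)
  moreover obtain C R l where X: "pom_rep (pom_one :: 'a pomset) = (C, R, l)"
    by (cases "pom_rep (pom_one :: 'a pomset)") auto
  ultimately have "lp_iso E (C, R, l)"
    using pom_rep[of "pom_one :: 'a pomset"] lp_iso_refl unfolding lp_class_def by auto
  then have "C = {}" "R = {}"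
    using pom_rep[of "pom_one :: 'a pomset"]
    unfolding X lp_iso_def E_def is_lposet_def by (auto simp: bij_betw_def)
  then show ?thesis
    using X by auto
qed

lemma pom_seq_one_left: "pom_seq pom_one V = V"
proof -
  obtain l where L: "pom_rep (pom_one :: 'a pomset) = ({}, {}, l)"
    using pom_rep_one by blast
  obtain C R l' where Y: "pom_rep V = (C, R, l')"
    by (cases "pom_rep V") auto
  have "lp_iso (pom_rep V) (lp_seq (pom_rep pom_one) (pom_rep V))"
    unfolding L Y lp_seq_def lp_iso_def
    by (auto simp: bij_betw_def inj_on_def intro!: exI[of _ "\<lambda>n. 2*n+1"])
  then show ?thesis
    unfolding pom_seq_def by (rule pom_of_iso_rep)
qed

lemma pom_seq_one_right: "pom_seq U pom_one = U"
proof -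
  obtain l where L: "pom_rep (pom_one :: 'a pomset) = ({}, {}, l)"
    using pom_rep_one by blast
  obtain C R l' where Y: "pom_rep U = (C, R, l')"
    by (cases "pom_rep U") auto
  have "lp_iso (pom_rep U) (lp_seq (pom_rep U) (pom_rep pom_one))"
    unfolding L Y lp_seq_def lp_iso_def
    by (auto simp: bij_betw_def inj_on_def intro!: exI[of _ "\<lambda>n. 2*n"])
  then show ?thesis
    unfolding pom_seq_def by (rule pom_of_iso_rep)
qed

lemma par_star_one: "pom_one \<in> par_star L"
  unfolding par_star_def by (auto intro: exI[of _ 0])

lemma par_star_par: "U \<in> L \<Longrightarrow> V \<in> par_star L \<Longrightarrow> pom_par U V \<in> par_star L"
  unfolding par_star_def by (blast intro: par_pow.simps(2)[THEN equalityD2, THEN subsetD])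

lemma par_star_least:
  assumes "pom_one \<in> M" and "\<And>U V. U \<in> L \<Longrightarrow> V \<in> M \<Longrightarrow> pom_par U V \<in> M"
  shows "par_star L \<subseteq> M"
proof -
  have "par_pow L n \<subseteq> M" for n
    using assms by (induction n) auto
  then show ?thesis
    unfolding par_star_def by blast
qed

lemma trace_from_bot:
  assumes "is_PA \<delta> \<gamma> F qbot qtop" "trace \<delta> \<gamma> F p U p'" "p = qbot"
  shows "p' = qbot"
  using assms(2,3) assms(1) by induction (auto simp: is_PA_def)

lemma trace_from_top:
  assumes PA: "is_PA \<delta> \<gamma> F qbot qtop" and "trace \<delta> \<gamma> F p U p'" "p = qtop"
  shows "p' = qbot \<or> (p' = qtop \<and> U = pom_one)"
  using assms(2,3)
proof induction
  case (tr_seq p U q'' V q')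
  then show ?case
    using trace_from_bot[OF PA] pom_seq_one_left by metis
qed (use PA in \<open>auto simp: is_PA_def\<close>)

lemma trace_from_recursive:
  assumes PA: "is_PA \<delta> \<gamma> F qbot qtop" and rec: "recursive_state \<delta> \<gamma> F qbot qtop q"
    and "trace \<delta> \<gamma> F p U p'" "p = q"
  shows "p' = qbot \<or> (p' = q \<and> U = pom_one) \<or>
         (p' = qtop \<and> U \<in> par_star (\<Union>r\<in>{r. \<gamma> q r q = qtop}. lang \<delta> \<gamma> F r))"
  using assms(3,4)
proof induction
  case (tr_one p)
  then show ?case by simp
next
  case (tr_atom p a)
  then show ?case
    using rec by (simp add: recursive_state_def)
next
  case (tr_seq p U q'' V q')
  consider "q'' = qbot" | "q'' = q" "U = pom_one"
    | "q'' = qtop" "U \<in> par_star (\<Union>r\<in>{r. \<gamma> q r q = qtop}. lang \<delta> \<gamma> F r)"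
    using tr_seq.IH(1)[OF tr_seq.prems] by blast
  then show ?case
  proof cases
    case 1
    then show ?thesis
      using trace_from_bot[OF PA tr_seq.hyps(2)] by auto
  next
    case 2
    then show ?thesis
      using tr_seq.IH(2) pom_seq_one_left by auto
  next
    case 3
    then show ?thesis
      using trace_from_top[OF PA tr_seq.hyps(2)] by (auto simp: pom_seq_one_right)
  qed
next
  case (tr_par r U r' s V s' p)
  show ?case
  proof (cases "\<gamma> p r s = qbot")
    case False
    with rec tr_par.prems have s: "s = q" and top: "\<gamma> q r q = qtop"
      by (auto simp: recursive_state_def)
    have "U \<in> (\<Union>r\<in>{r. \<gamma> q r q = qtop}. lang \<delta> \<gamma> F r)"
      using top tr_par.hyps(1,2) unfolding lang_def by auto
    moreover have "V \<in> par_star (\<Union>r\<in>{r. \<gamma> q r q = qtop}. lang \<delta> \<gamma> F r)"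
      \<comment> \<open>the run on the right branch accepts, so it does not end in qbot\<close>
      using tr_par.IH(2)[OF s] tr_par.hyps(4) PA par_star_one by (auto simp: is_PA_def)
    ultimately show ?thesis
      using top s tr_par.prems by (simp add: par_star_par)
  qed simp
qed

lemma lang_recursive_subset:
  assumes "is_PA \<delta> \<gamma> F qbot qtop" "recursive_state \<delta> \<gamma> F qbot qtop q"
  shows "lang \<delta> \<gamma> F q \<subseteq> par_star (\<Union>r\<in>{r. \<gamma> q r q = qtop}. lang \<delta> \<gamma> F r)"
  using trace_from_recursive[OF assms _ refl] assms(1) par_star_one
  by (fastforce simp: lang_def is_PA_def)

lemma par_star_subset_lang_recursive:
  assumes PA: "is_PA \<delta> \<gamma> F qbot qtop" and rec: "recursive_state \<delta> \<gamma> F qbot qtop q"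
  shows "par_star (\<Union>r\<in>{r. \<gamma> q r q = qtop}. lang \<delta> \<gamma> F r) \<subseteq> lang \<delta> \<gamma> F q"
proof (rule par_star_least)
  show "pom_one \<in> lang \<delta> \<gamma> F q"
    using rec by (auto simp: recursive_state_def lang_def intro: tr_one)
next
  fix U V
  assume "U \<in> (\<Union>r\<in>{r. \<gamma> q r q = qtop}. lang \<delta> \<gamma> F r)" "V \<in> lang \<delta> \<gamma> F q"
  then obtain r r' s' where r: "\<gamma> q r q = qtop" and "r' \<in> F" "trace \<delta> \<gamma> F r U r'"
    and "s' \<in> F" "trace \<delta> \<gamma> F q V s'"
    unfolding lang_def by auto
  then have "trace \<delta> \<gamma> F q (pom_par U V) qtop"
    by (metis tr_par)
  then show "pom_par U V \<in> lang \<delta> \<gamma> F q"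
    using PA unfolding lang_def is_PA_def by auto
qed

theorem mainTheorem10:
  fixes \<delta> :: "'q \<Rightarrow> 'a::finite \<Rightarrow> 'q" and \<gamma> :: "'q \<Rightarrow> 'q \<Rightarrow> 'q \<Rightarrow> 'q"
    and F :: "'q set" and qbot qtop q :: 'q
  assumes "is_PA \<delta> \<gamma> F qbot qtop"
    and "finitely_supported \<delta> \<gamma> qbot"
    and "well_nested \<delta> \<gamma> F qbot qtop"
    and "recursive_state \<delta> \<gamma> F qbot qtop q"
  shows "lang \<delta> \<gamma> F q = par_star (\<Union>r\<in>{r. \<gamma> q r q = qtop}. lang \<delta> \<gamma> F r)"
  using lang_recursive_subset[OF assms(1,4)] par_star_subset_lang_recursive[OF assms(1,4)]
  by (rule subset_antisym)

end
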